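(* If $\mathscr{S}$ is a relaxed scenario, then $G_{=}(\mathscr{S})$ contains no induced cycle on $5$ vertices and no induced cycle on $\ell$ vertices for any $\ell\geq 7$. In particular, $G_{=}(\mathscr{S})$ is odd-hole free (contains no induced cycle of odd length greater than three).
   Context: All trees are planted phylogenetic trees: a tree $T$ has a distinguished vertex $0_T$ of degree $1$ whose unique neighbor $\rho_T$ is the root, and every vertex other than $0_T$ and the leaves $L(T)$ has at least two children. For $x,y\in V(T)$ write $y\preceq_T x$ if $x$ lies on the path from $0_T$ to $y$; edges are written $uv$ with $v\prec_T u$. $\mathrm{lca}_T$ denotes the last common ancestor. A time map for $T$ is $\tau_T\colon V(T)\to\mathbb{R}$ with $\tau_T(x)<\tau_T(y)$ whenever $x\prec_T y$. A relaxed scenario $\mathscr{S}=(T,S,\sigma,\mu,\tau_T,\tau_S)$ consists of a gene tree $T$ with time map $\tau_T$, a species tree $S$ with time map $\tau_S$, a map $\sigma\colon L(T)\to M$ with $M\subseteq L(S)$, and a map $\mu\colon V(T)\to V(S)\cup E(S)$ such that (S0) $\mu(x)=0_S$ iff $x=0_T$; (S1) $\mu(x)\in L(S)$ iff $x\in L(T)$, in which case $\mu(x)=\sigma(x)$; (S2) if $\mu(x)\in V(S)$ then $\tau_S(\mu(x))=\tau_T(x)$; (S3) if $\mu(x)=uv\in E(S)$ then $\tau_S(v)<\tau_T(x)<\tau_S(u)$. The EDT graph $G_{=}(\mathscr{S})$ has vertex set $L(T)$ and an edge $xy$ ($x\ne y$) iff $\tau_T(\mathrm{lca}_T(x,y))=\tau_S(\mathrm{lca}_S(\sigma(x),\sigma(y)))$.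 *)

theory Defs
  imports Complex_Main
begin

text \<open>A (planted, rooted) tree is given by a vertex set V, a set E of directed
  edges (u,v) with u the parent of v, and the planted vertex z (= 0_T).\<close>

definition children :: "('a \<times> 'a) set \<Rightarrow> 'a \<Rightarrow> 'a set" where
  "children E v = {w. (v, w) \<in> E}"

definition planted_phylo_tree :: "'a set \<Rightarrow> ('a \<times> 'a) set \<Rightarrow> 'a \<Rightarrow> bool" where
  "planted_phylo_tree V E z \<longleftrightarrow>
     finite V \<and> E \<subseteq> V \<times> V \<and> z \<in> V \<and>
     (\<forall>u. (u, z) \<notin> E) \<and>
     (\<forall>v\<in>V. v \<noteq> z \<longrightarrow> (\<exists>!u. (u, v) \<in> E)) \<and>
     (\<forall>v\<in>V. (z, v) \<in> E\<^sup>*) \<and>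
     card (children E z) = 1 \<and>
     (\<forall>v\<in>V. v \<noteq> z \<and> children E v \<noteq> {} \<longrightarrow> card (children E v) \<ge> 2)"

definition leaves :: "'a set \<Rightarrow> ('a \<times> 'a) set \<Rightarrow> 'a \<Rightarrow> 'a set" where
  "leaves V E z = {v \<in> V. v \<noteq> z \<and> children E v = {}}"

text \<open>y \<preceq>_T x iff x lies on the path from 0_T to y, i.e. (x,y) \<in> E^*.\<close>
definition lca :: "'a set \<Rightarrow> ('a \<times> 'a) set \<Rightarrow> 'a \<Rightarrow> 'a \<Rightarrow> 'a" where
  "lca V E x y = (THE w. w \<in> V \<and> (w, x) \<in> E\<^sup>* \<and> (w, y) \<in> E\<^sup>* \<and>
      (\<forall>w'\<in>V. (w', x) \<in> E\<^sup>* \<and> (w', y) \<in> E\<^sup>* \<longrightarrow> (w', w) \<in> E\<^sup>*))"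

definition time_map :: "'a set \<Rightarrow> ('a \<times> 'a) set \<Rightarrow> ('a \<Rightarrow> real) \<Rightarrow> bool" where
  "time_map V E \<tau> \<longleftrightarrow> (\<forall>x\<in>V. \<forall>y\<in>V. (y, x) \<in> E\<^sup>+ \<longrightarrow> \<tau> x < \<tau> y)"

datatype 'b vert_or_edge = SVtx 'b | SEdge 'b 'b

definition relaxed_scenario ::
  "'a set \<Rightarrow> ('a \<times> 'a) set \<Rightarrow> 'a \<Rightarrow> 'b set \<Rightarrow> ('b \<times> 'b) set \<Rightarrow> 'b \<Rightarrow>
   ('a \<Rightarrow> 'b) \<Rightarrow> ('a \<Rightarrow> 'b vert_or_edge) \<Rightarrow> ('a \<Rightarrow> real) \<Rightarrow> ('b \<Rightarrow> real) \<Rightarrow> bool" where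
  "relaxed_scenario VT ET zT VS ES zS \<sigma> \<mu> \<tau>T \<tau>S \<longleftrightarrow>
     planted_phylo_tree VT ET zT \<and> planted_phylo_tree VS ES zS \<and>
     time_map VT ET \<tau>T \<and> time_map VS ES \<tau>S \<and>
     (\<forall>x\<in>leaves VT ET zT. \<sigma> x \<in> leaves VS ES zS) \<and>
     (\<forall>x\<in>VT. case \<mu> x of SVtx v \<Rightarrow> v \<in> VS | SEdge u v \<Rightarrow> (u, v) \<in> ES) \<and>
     (\<forall>x\<in>VT. \<mu> x = SVtx zS \<longleftrightarrow> x = zT) \<and>
     (\<forall>x\<in>VT. (\<exists>v\<in>leaves VS ES zS. \<mu> x = SVtx v) \<longleftrightarrow> x \<in> leaves VT ET zT) \<and>
     (\<forall>x\<in>leaves VT ET zT. \<mu> x = SVtx (\<sigma> x)) \<and>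
     (\<forall>x\<in>VT. \<forall>v. \<mu> x = SVtx v \<longrightarrow> \<tau>S v = \<tau>T x) \<and>
     (\<forall>x\<in>VT. \<forall>u v. \<mu> x = SEdge u v \<longrightarrow> \<tau>S v < \<tau>T x \<and> \<tau>T x < \<tau>S u)"

definition edt_edge ::
  "'a set \<Rightarrow> ('a \<times> 'a) set \<Rightarrow> 'a \<Rightarrow> 'b set \<Rightarrow> ('b \<times> 'b) set \<Rightarrow>
   ('a \<Rightarrow> 'b) \<Rightarrow> ('a \<Rightarrow> real) \<Rightarrow> ('b \<Rightarrow> real) \<Rightarrow> 'a \<Rightarrow> 'a \<Rightarrow> bool" where
  "edt_edge VT ET zT VS ES \<sigma> \<tau>T \<tau>S x y \<longleftrightarrow>
     x \<in> leaves VT ET zT \<and> y \<in> leaves VT ET zT \<and> x \<noteq> y \<and>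
     \<tau>T (lca VT ET x y) = \<tau>S (lca VS ES (\<sigma> x) (\<sigma> y))"

definition induced_cycle :: "('a \<Rightarrow> 'a \<Rightarrow> bool) \<Rightarrow> 'a set \<Rightarrow> 'a list \<Rightarrow> bool" where
  "induced_cycle adj V vs \<longleftrightarrow>
     length vs \<ge> 3 \<and> distinct vs \<and> set vs \<subseteq> V \<and>
     (\<forall>i<length vs. \<forall>j<length vs. i \<noteq> j \<longrightarrow>
        (adj (vs ! i) (vs ! j) \<longleftrightarrow>
           j = Suc i mod length vs \<or> i = Suc j mod length vs))"

end

theory Submission
  imports Defs
begin

text \<open>Both \<open>x y \<mapsto> \<tau>\<^sub>T(lca\<^sub>T(x, y))\<close> and \<open>x y \<mapsto> \<tau>\<^sub>S(lca\<^sub>S(\<sigma> x, \<sigma> y))\<close> satisfy the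
  ultrametric inequality, and \<open>G\<^sub>=\<close> is the graph of pairs on which the two agree. Along an
  induced path of such an agreement graph all edges carry one common value \<open>c\<close>: if two
  consecutive edges carried different values, both ultrametrics would take the larger one on
  the chord, making the chord an edge. Hence all distances on the path are at most \<open>c\<close>, and
  two of its vertices are non-adjacent iff they lie in a common open \<open>c\<close>-ball of one of the
  two ultrametrics. So the non-edges form the union of two equivalence relations, which is
  impossible for the complements of \<open>C\<^sub>5\<close> and of \<open>P\<^sub>6\<close>; and every induced cycle of
  length at least 7 contains an induced \<open>P\<^sub>6\<close>.\<close>

lemma planted_phylo_treeD:
  assumes "planted_phylo_tree V E z"
  shows "E \<subseteq> V \<times> V" "finite V" "z \<in> V" "(u, z) \<notin> E"
    "\<And>v u u'. v \<in> V \<Longrightarrow> v \<noteq> z \<Longrightarrow> (u, v) \<in> E \<Longrightarrow> (u', v) \<in> E \<Longrightarrow> u = u'"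
    "v \<in> V \<Longrightarrow> (z, v) \<in> E\<^sup>*"
  using assms unfolding planted_phylo_tree_def by blast+

lemma ancestors_comparable:
  assumes T: "planted_phylo_tree V E z" and "(u, x) \<in> E\<^sup>*" "(w, x) \<in> E\<^sup>*"
  shows "(u, w) \<in> E\<^sup>* \<or> (w, u) \<in> E\<^sup>*"
  using assms(2,3)
proof (induction arbitrary: w rule: rtrancl_induct)
  case base
  then show ?case by blast
next
  case (step y x)
  show ?case
  proof (cases "w = x")
    case True
    then show ?thesis using step.hyps by auto
  next
    case False
    then obtain y' where "(w, y') \<in> E\<^sup>*" "(y', x) \<in> E"
      using step.prems by (metis rtranclE)
    moreover have "x \<in> V" "x \<noteq> z"
      using step.hyps(2) planted_phylo_treeD(1,4)[OF T] by auto
    ultimately have "(w, y) \<in> E\<^sup>*"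
      using planted_phylo_treeD(5)[OF T] step.hyps(2) by metis
    then show ?thesis using step.IH by blast
  qed
qed

lemma time_map_ancestor_less:
  assumes "planted_phylo_tree V E z" "time_map V E \<tau>" "(u, v) \<in> E\<^sup>*" "u \<noteq> v"
  shows "\<tau> v < \<tau> u"
proof -
  have "(u, v) \<in> E\<^sup>+" using assms(3,4) by (simp add: rtrancl_eq_or_trancl)
  moreover have "E\<^sup>+ \<subseteq> V \<times> V"
    using trancl_subset_Sigma[OF planted_phylo_treeD(1)[OF assms(1)]] .
  ultimately show ?thesis using assms(2) unfolding time_map_def by blast
qed

lemma time_map_ancestor_le:
  assumes "planted_phylo_tree V E z" "time_map V E \<tau>" "(u, v) \<in> E\<^sup>*"
  shows "\<tau> v \<le> \<tau> u"
  using time_map_ancestor_less[OF assms] by fastforce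

text \<open>The time map makes ancestry antisymmetric, so the common ancestor of least
  time is the unique last common ancestor.\<close>

lemma lca_last_common_ancestor:
  assumes T: "planted_phylo_tree V E z" and tm: "time_map V E \<tau>"
    and "x \<in> V" "y \<in> V"
  shows "lca V E x y \<in> V" "(lca V E x y, x) \<in> E\<^sup>*" "(lca V E x y, y) \<in> E\<^sup>*"
    "\<And>w. w \<in> V \<Longrightarrow> (w, x) \<in> E\<^sup>* \<Longrightarrow> (w, y) \<in> E\<^sup>* \<Longrightarrow> (w, lca V E x y) \<in> E\<^sup>*"
proof -
  define P where "P = (\<lambda>w. w \<in> V \<and> (w, x) \<in> E\<^sup>* \<and> (w, y) \<in> E\<^sup>* \<and>
      (\<forall>w'\<in>V. (w', x) \<in> E\<^sup>* \<and> (w', y) \<in> E\<^sup>* \<longrightarrow> (w', w) \<in> E\<^sup>*))"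
  define C where "C = {w \<in> V. (w, x) \<in> E\<^sup>* \<and> (w, y) \<in> E\<^sup>*}"
  have "finite C" "z \<in> C"
    using planted_phylo_treeD(2,3,6)[OF T] assms(3,4) unfolding C_def by auto
  then obtain w where w: "w \<in> C" "\<tau> w = Min (\<tau> ` C)"
    by (metis Min_in empty_iff finite_imageI imageE image_is_empty)
  have "P w"
    unfolding P_def
  proof (intro conjI ballI impI)
    fix w' assume "w' \<in> V" "(w', x) \<in> E\<^sup>* \<and> (w', y) \<in> E\<^sup>*"
    then have "(w, w') \<in> E\<^sup>* \<or> (w', w) \<in> E\<^sup>*" "\<tau> w \<le> \<tau> w'"
      using ancestors_comparable[OF T] w \<open>finite C\<close> unfolding C_def by auto
    then show "(w', w) \<in> E\<^sup>*"
      using time_map_ancestor_less[OF T tm] by fastforce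
  qed (use w in \<open>auto simp: C_def\<close>)
  moreover have "w' = w" if "P w'" for w'
  proof (rule ccontr)
    assume "w' \<noteq> w"
    moreover have "(w, w') \<in> E\<^sup>*" "(w', w) \<in> E\<^sup>*"
      using that \<open>P w\<close> unfolding P_def by auto
    ultimately show False
      using time_map_ancestor_less[OF T tm] by (metis less_asym)
  qed
  ultimately have "lca V E x y = w"
    unfolding lca_def P_def[symmetric] by (rule the_equality)
  with \<open>P w\<close> show "lca V E x y \<in> V" "(lca V E x y, x) \<in> E\<^sup>*" "(lca V E x y, y) \<in> E\<^sup>*"
    "\<And>w'. w' \<in> V \<Longrightarrow> (w', x) \<in> E\<^sup>* \<Longrightarrow> (w', y) \<in> E\<^sup>* \<Longrightarrow> (w', lca V E x y) \<in> E\<^sup>*"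
    unfolding P_def by auto
qed

lemma lca_commute: "lca V E x y = lca V E y x"
  unfolding lca_def by (rule arg_cong[where f = The]) auto

text \<open>Only symmetry and the strong triangle inequality are required; the values on the
  diagonal are unconstrained.\<close>

definition ultrametric_on :: "'a set \<Rightarrow> ('a \<Rightarrow> 'a \<Rightarrow> 'b::linorder) \<Rightarrow> bool" where
  "ultrametric_on A d \<longleftrightarrow>
     (\<forall>x\<in>A. \<forall>y\<in>A. d x y = d y x) \<and>
     (\<forall>x\<in>A. \<forall>y\<in>A. \<forall>z\<in>A. d x z \<le> max (d x y) (d y z))"

lemma ultrametric_on_commute:
  "ultrametric_on A d \<Longrightarrow> x \<in> A \<Longrightarrow> y \<in> A \<Longrightarrow> d x y = d y x"
  unfolding ultrametric_on_def by blast

lemma ultrametric_on_le_max: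
  "ultrametric_on A d \<Longrightarrow> x \<in> A \<Longrightarrow> y \<in> A \<Longrightarrow> z \<in> A \<Longrightarrow> d x z \<le> max (d x y) (d y z)"
  unfolding ultrametric_on_def by blast

lemma ultrametric_on_compose:
  assumes "ultrametric_on A d" "f ` B \<subseteq> A"
  shows "ultrametric_on B (\<lambda>i j. d (f i) (f j))"
  using assms unfolding ultrametric_on_def by (simp add: image_subset_iff)

lemma lca_time_ultrametric:
  assumes T: "planted_phylo_tree V E z" and tm: "time_map V E \<tau>"
  shows "ultrametric_on V (\<lambda>x y. \<tau> (lca V E x y))"
  unfolding ultrametric_on_def
proof (intro conjI ballI)
  fix a b c assume V: "a \<in> V" "b \<in> V" "c \<in> V"
  note ab = lca_last_common_ancestor[OF T tm V(1,2)]
  note bc = lca_last_common_ancestor[OF T tm V(2,3)]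
  note ac = lca_last_common_ancestor[OF T tm V(1,3)]
  have "(lca V E a b, lca V E b c) \<in> E\<^sup>* \<or> (lca V E b c, lca V E a b) \<in> E\<^sup>*"
    using ancestors_comparable[OF T ab(3) bc(2)] .
  then have "(lca V E a b, lca V E a c) \<in> E\<^sup>* \<or> (lca V E b c, lca V E a c) \<in> E\<^sup>*"
    using ab bc ac by (meson rtrancl_trans)
  then show "\<tau> (lca V E a c) \<le> max (\<tau> (lca V E a b)) (\<tau> (lca V E b c))"
    using time_map_ancestor_le[OF T tm] by (meson le_max_iff_disj)
qed (rule arg_cong[where f = \<tau>, OF lca_commute])

lemma ultrametric_on_isosceles:
  assumes "ultrametric_on A d" "x \<in> A" "y \<in> A" "z \<in> A" "d x y \<noteq> d y z"
  shows "d x z = max (d x y) (d y z)"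
proof -
  have "d x z \<le> max (d x y) (d y z)" "d x y \<le> max (d x z) (d y z)" "d y z \<le> max (d x y) (d x z)"
    using ultrametric_on_le_max[OF assms(1)] ultrametric_on_commute[OF assms(1)] assms(2-4)
    by (metis max.commute)+
  then show ?thesis using assms(5) by (auto simp: max_def split: if_splits)
qed

lemma ultrametric_on_agreement_propagates:
  assumes "ultrametric_on A d" "ultrametric_on A d'" "x \<in> A" "y \<in> A" "z \<in> A"
    and "d x y = d' x y" "d y z = d' y z" "d x z \<noteq> d' x z"
  shows "d x y = d y z"
  using ultrametric_on_isosceles[OF assms(1,3-5)] ultrametric_on_isosceles[OF assms(2,3-5)]
    assms(6-8) by metis

lemma ultrametric_on_chain_bound:
  assumes "ultrametric_on {..m} d" "\<And>k. k < m \<Longrightarrow> d k (Suc k) \<le> c" "i < j" "j \<le> m"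
  shows "d i j \<le> c"
  using assms(3,4)
proof (induction j)
  case (Suc j)
  show ?case
  proof (cases "i = j")
    case False
    then have "d i j \<le> c" using Suc by simp
    moreover have "d i (Suc j) \<le> max (d i j) (d j (Suc j))"
      using ultrametric_on_le_max[OF assms(1)] Suc.prems by simp
    ultimately show ?thesis
      using assms(2) Suc.prems by (meson Suc_le_lessD max.bounded_iff order_trans)
  qed (use assms(2) Suc.prems in simp)
qed simp

lemma ultrametric_on_less_symp_transp:
  assumes "ultrametric_on A d"
  shows "symp (\<lambda>x y. x \<in> A \<and> y \<in> A \<and> d x y < c)"
    "transp (\<lambda>x y. x \<in> A \<and> y \<in> A \<and> d x y < c)"
  using ultrametric_on_commute[OF assms] ultrametric_on_le_max[OF assms]
  by (auto intro!: sympI transpI) (metis max_less_iff_conj order.strict_trans1)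

lemma ultrametric_agreement_induced_path:
  fixes t s :: "nat \<Rightarrow> nat \<Rightarrow> 'b::linorder"
  assumes t: "ultrametric_on {..m} t" and s: "ultrametric_on {..m} s"
    and edge: "\<And>k. k < m \<Longrightarrow> t k (Suc k) = s k (Suc k)"
    and chord: "\<And>k. Suc (Suc k) \<le> m \<Longrightarrow> t k (Suc (Suc k)) \<noteq> s k (Suc (Suc k))"
  shows "\<And>k. k < m \<Longrightarrow> t k (Suc k) = t 0 1" "\<And>k. k < m \<Longrightarrow> s k (Suc k) = t 0 1"
    "\<And>i j. i < j \<Longrightarrow> j \<le> m \<Longrightarrow> t i j \<le> t 0 1" "\<And>i j. i < j \<Longrightarrow> j \<le> m \<Longrightarrow> s i j \<le> t 0 1"
proof -
  show t_edge: "t k (Suc k) = t 0 1" if "k < m" for k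
    using that
  proof (induction k)
    case (Suc k)
    have "t k (Suc k) = t (Suc k) (Suc (Suc k))"
      using ultrametric_on_agreement_propagates[OF t s, of k "Suc k" "Suc (Suc k)"]
        edge chord Suc.prems by simp
    with Suc show ?case by simp
  qed simp
  show s_edge: "s k (Suc k) = t 0 1" if "k < m" for k
    using trans[OF sym[OF edge[OF that]] t_edge[OF that]] .
  show "t i j \<le> t 0 1" if "i < j" "j \<le> m" for i j
    by (rule ultrametric_on_chain_bound[OF t _ that], rule eq_refl, erule t_edge)
  show "s i j \<le> t 0 1" if "i < j" "j \<le> m" for i j
    by (rule ultrametric_on_chain_bound[OF s _ that], rule eq_refl, erule s_edge)
qed

lemma ultrametric_agreement_cover_by_pers:
  fixes t s :: "nat \<Rightarrow> nat \<Rightarrow> 'b::linorder"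
  assumes t: "ultrametric_on {..m} t" and s: "ultrametric_on {..m} s"
    and t_le: "\<And>i j. i < j \<Longrightarrow> j \<le> m \<Longrightarrow> t i j \<le> c"
    and s_le: "\<And>i j. i < j \<Longrightarrow> j \<le> m \<Longrightarrow> s i j \<le> c"
    and agree: "\<And>i j. i < j \<Longrightarrow> j \<le> m \<Longrightarrow> t i j = s i j \<Longrightarrow> t i j = c"
  obtains P Q where "symp P" "transp P" "symp Q" "transp Q"
    "\<And>i j. i < j \<Longrightarrow> j \<le> m \<Longrightarrow> P i j \<or> Q i j \<longleftrightarrow> t i j \<noteq> s i j"
proof
  show "symp (\<lambda>i j. i \<in> {..m} \<and> j \<in> {..m} \<and> t i j < c)"
    "transp (\<lambda>i j. i \<in> {..m} \<and> j \<in> {..m} \<and> t i j < c)"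
    "symp (\<lambda>i j. i \<in> {..m} \<and> j \<in> {..m} \<and> s i j < c)"
    "transp (\<lambda>i j. i \<in> {..m} \<and> j \<in> {..m} \<and> s i j < c)"
    using ultrametric_on_less_symp_transp[OF t] ultrametric_on_less_symp_transp[OF s] by blast+
next
  fix i j :: nat assume "i < j" "j \<le> m"
  then show "(i \<in> {..m} \<and> j \<in> {..m} \<and> t i j < c) \<or> (i \<in> {..m} \<and> j \<in> {..m} \<and> s i j < c)
      \<longleftrightarrow> t i j \<noteq> s i j"
    using t_le[of i j] s_le[of i j] agree[of i j] by (auto simp: less_le)
qed

lemma symp_transp_common_left:
  "symp R \<Longrightarrow> transp R \<Longrightarrow> R x y \<Longrightarrow> R x z \<Longrightarrow> R y z"
  by (meson sympD transpD)

lemma symp_transp_common_right: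
  "symp R \<Longrightarrow> transp R \<Longrightarrow> R y x \<Longrightarrow> R z x \<Longrightarrow> R y z"
  by (meson sympD transpD)

lemma co_C5_not_union_of_two_pers:
  fixes P Q :: "nat \<Rightarrow> nat \<Rightarrow> bool"
  assumes "symp P" "transp P" "symp Q" "transp Q"
    and "\<And>i j. i < j \<Longrightarrow> j \<le> 4 \<Longrightarrow> P i j \<or> Q i j \<longleftrightarrow> \<not> (j = Suc i \<or> (i = 0 \<and> j = 4))"
  shows False
proof -
  have wlog: False if "P' 0 2" "symp P'" "transp P'" "symp Q'" "transp Q'"
    and cover: "\<And>i j. i < j \<Longrightarrow> j \<le> 4 \<Longrightarrow> P' i j \<or> Q' i j \<longleftrightarrow> \<not> (j = Suc i \<or> (i = 0 \<and> j = 4))"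
    for P' Q' :: "nat \<Rightarrow> nat \<Rightarrow> bool"
  proof -
    note P' = symp_transp_common_left[OF \<open>symp P'\<close> \<open>transp P'\<close>]
      symp_transp_common_right[OF \<open>symp P'\<close> \<open>transp P'\<close>]
    note Q' = symp_transp_common_left[OF \<open>symp Q'\<close> \<open>transp Q'\<close>]
      symp_transp_common_right[OF \<open>symp Q'\<close> \<open>transp Q'\<close>]
    \<comment> \<open>Two chords at a common vertex whose other ends are adjacent cannot lie in the same
      relation, so the relations alternate along the chords 02, 03, 13, 14, 24.\<close>
    have "Q' 0 3" using cover[of 0 3] cover[of 2 3] P'(1)[OF \<open>P' 0 2\<close>, of 3] by auto
    then have "P' 1 3" using cover[of 1 3] cover[of 0 1] Q'(2)[OF \<open>Q' 0 3\<close>, of 1] by auto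
    then have "Q' 1 4" using cover[of 1 4] cover[of 3 4] P'(1)[OF \<open>P' 1 3\<close>, of 4] by auto
    then have "P' 2 4" using cover[of 2 4] cover[of 1 2] Q'(2)[OF \<open>Q' 1 4\<close>, of 2] by auto
    then show False using cover[of 0 4] transpD[OF \<open>transp P'\<close> \<open>P' 0 2\<close>] by auto
  qed
  show False
  proof (cases "P 0 2")
    case True
    then show False using wlog[of P Q] assms by blast
  next
    case False
    then have "Q 0 2" using assms(5)[of 0 2] by simp
    moreover have "Q i j \<or> P i j \<longleftrightarrow> \<not> (j = Suc i \<or> (i = 0 \<and> j = 4))" if "i < j" "j \<le> 4" for i j
      using assms(5)[OF that] by blast
    ultimately show False using wlog[of Q P] assms(1-4) by blast
  qed
qed

lemma co_P6_not_union_of_two_pers: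
  fixes P Q :: "nat \<Rightarrow> nat \<Rightarrow> bool"
  assumes "symp P" "transp P" "symp Q" "transp Q"
    and "\<And>i j. i < j \<Longrightarrow> j \<le> 5 \<Longrightarrow> P i j \<or> Q i j \<longleftrightarrow> j \<noteq> Suc i"
  shows False
proof -
  have wlog: False if "P' 0 2" "symp P'" "transp P'" "symp Q'" "transp Q'"
    and cover: "\<And>i j. i < j \<Longrightarrow> j \<le> 5 \<Longrightarrow> P' i j \<or> Q' i j \<longleftrightarrow> j \<noteq> Suc i"
    for P' Q' :: "nat \<Rightarrow> nat \<Rightarrow> bool"
  proof -
    note P' = symp_transp_common_left[OF \<open>symp P'\<close> \<open>transp P'\<close>]
      symp_transp_common_right[OF \<open>symp P'\<close> \<open>transp P'\<close>]
    note Q' = symp_transp_common_left[OF \<open>symp Q'\<close> \<open>transp Q'\<close>]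
      symp_transp_common_right[OF \<open>symp Q'\<close> \<open>transp Q'\<close>]
    have "Q' 0 3" using cover[of 0 3] cover[of 2 3] P'(1)[OF \<open>P' 0 2\<close>, of 3] by auto
    then have "P' 1 3" using cover[of 1 3] cover[of 0 1] Q'(2)[OF \<open>Q' 0 3\<close>, of 1] by auto
    then have "Q' 1 4" using cover[of 1 4] cover[of 3 4] P'(1)[OF \<open>P' 1 3\<close>, of 4] by auto
    then have "P' 2 4" using cover[of 2 4] cover[of 1 2] Q'(2)[OF \<open>Q' 1 4\<close>, of 2] by auto
    then have "\<not> P' 2 5" using cover[of 4 5] P'(1)[OF \<open>P' 2 4\<close>, of 5] by auto
    then have "Q' 2 5" using cover[of 2 5] by auto
    have "Q' 0 5" using cover[of 0 5] P'(1)[OF \<open>P' 0 2\<close>, of 5] \<open>\<not> P' 2 5\<close> by auto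
    then have "Q' 3 5" using Q'(1)[OF \<open>Q' 0 3\<close>] by blast
    then show False using cover[of 2 3] Q'(2)[OF \<open>Q' 2 5\<close>, of 3] by auto
  qed
  show False
  proof (cases "P 0 2")
    case True
    then show False using wlog[of P Q] assms by blast
  next
    case False
    then have "Q 0 2" using assms(5)[of 0 2] by simp
    moreover have "Q i j \<or> P i j \<longleftrightarrow> j \<noteq> Suc i" if "i < j" "j \<le> 5" for i j
      using assms(5)[OF that] by blast
    ultimately show False using wlog[of Q P] assms(1-4) by blast
  qed
qed

lemma ultrametric_agreement_no_induced_C5:
  fixes t s :: "nat \<Rightarrow> nat \<Rightarrow> 'b::linorder"
  assumes t: "ultrametric_on {..4} t" and s: "ultrametric_on {..4} s"
    and adj: "\<And>i j. i < j \<Longrightarrow> j \<le> 4 \<Longrightarrow> t i j = s i j \<longleftrightarrow> j = Suc i \<or> (i = 0 \<and> j = 4)"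
  shows False
proof -
  have edge: "t k (Suc k) = s k (Suc k)" if "k < 4" for k
    using adj[of k "Suc k"] that by simp
  have chord: "t k (Suc (Suc k)) \<noteq> s k (Suc (Suc k))" if "Suc (Suc k) \<le> 4" for k
    using adj[of k "Suc (Suc k)"] that by auto
  note path = ultrametric_agreement_induced_path[OF t s edge chord]
  have "t 3 4 = t 4 0"
    using ultrametric_on_agreement_propagates[OF t s, of 3 4 0] adj[of 3 4] adj[of 0 4] adj[of 0 3]
      ultrametric_on_commute[OF t] ultrametric_on_commute[OF s] by simp
  then have closing: "t 0 4 = t 0 1" using path(1)[of 3] ultrametric_on_commute[OF t, of 0 4] by simp
  have agree: "t i j = t 0 1" if "i < j" "j \<le> 4" "t i j = s i j" for i j
  proof -
    have "j = Suc i \<or> (i = 0 \<and> j = 4)" using adj[OF that(1,2)] that(3) by blast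
    then show ?thesis using path(1)[of i] closing that(2) by auto
  qed
  obtain P Q where "symp P" "transp P" "symp Q" "transp Q"
    and cover: "\<And>i j. i < j \<Longrightarrow> j \<le> 4 \<Longrightarrow> P i j \<or> Q i j \<longleftrightarrow> t i j \<noteq> s i j"
    using ultrametric_agreement_cover_by_pers[OF t s path(3,4) agree] by blast
  then show False
    using co_C5_not_union_of_two_pers[of P Q] cover adj by blast
qed

lemma ultrametric_agreement_no_induced_P6:
  fixes t s :: "nat \<Rightarrow> nat \<Rightarrow> 'b::linorder"
  assumes t: "ultrametric_on {..5} t" and s: "ultrametric_on {..5} s"
    and adj: "\<And>i j. i < j \<Longrightarrow> j \<le> 5 \<Longrightarrow> t i j = s i j \<longleftrightarrow> j = Suc i"
  shows False
proof -
  have edge: "t k (Suc k) = s k (Suc k)" if "k < 5" for k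
    using adj[of k "Suc k"] that by simp
  have chord: "t k (Suc (Suc k)) \<noteq> s k (Suc (Suc k))" if "Suc (Suc k) \<le> 5" for k
    using adj[of k "Suc (Suc k)"] that by auto
  note path = ultrametric_agreement_induced_path[OF t s edge chord]
  have agree: "t i j = t 0 1" if "i < j" "j \<le> 5" "t i j = s i j" for i j
  proof -
    have "j = Suc i" using adj[OF that(1,2)] that(3) by blast
    then show ?thesis using path(1)[of i] that(2) by simp
  qed
  obtain P Q where "symp P" "transp P" "symp Q" "transp Q"
    and cover: "\<And>i j. i < j \<Longrightarrow> j \<le> 5 \<Longrightarrow> P i j \<or> Q i j \<longleftrightarrow> t i j \<noteq> s i j"
    using ultrametric_agreement_cover_by_pers[OF t s path(3,4) agree] by blast
  then show False
    using co_P6_not_union_of_two_pers[of P Q] cover adj by blast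
qed

lemma induced_cycle_cong:
  assumes "\<And>x y. x \<in> V \<Longrightarrow> y \<in> V \<Longrightarrow> x \<noteq> y \<Longrightarrow> adj x y \<longleftrightarrow> adj' x y"
  shows "induced_cycle adj V vs \<longleftrightarrow> induced_cycle adj' V vs"
proof -
  have "adj (vs ! i) (vs ! j) \<longleftrightarrow> adj' (vs ! i) (vs ! j)"
    if "distinct vs" "set vs \<subseteq> V" "i < length vs" "j < length vs" "i \<noteq> j" for i j
    using assms that by (simp add: nth_eq_iff_index_eq subset_iff)
  then show ?thesis unfolding induced_cycle_def by (simp cong: conj_cong)
qed

lemma ultrametric_agreement_induced_cycle_length:
  assumes d: "ultrametric_on A d" and d': "ultrametric_on A d'"
    and cycle: "induced_cycle (\<lambda>x y. d x y = d' x y) A vs"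
  shows "length vs \<noteq> 5" "\<not> 7 \<le> length vs"
proof -
  define n where "n = length vs"
  define t where "t i j = d (vs ! i) (vs ! j)" for i j
  define s where "s i j = d' (vs ! i) (vs ! j)" for i j
  have in_A: "(!) vs ` {..<n} \<subseteq> A" and
    adj: "\<And>i j. i < n \<Longrightarrow> j < n \<Longrightarrow> i \<noteq> j \<Longrightarrow> t i j = s i j \<longleftrightarrow> j = Suc i mod n \<or> i = Suc j mod n"
    using cycle unfolding induced_cycle_def t_def s_def n_def by auto
  have ultrametric: "ultrametric_on B t" "ultrametric_on B s" if "B \<subseteq> {..<n}" for B
    using ultrametric_on_compose[OF d, of "(!) vs" B] ultrametric_on_compose[OF d', of "(!) vs" B]
      in_A that unfolding t_def s_def by auto
  show "length vs \<noteq> 5"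
  proof
    assume "length vs = 5"
    then have "n = 5" by (simp add: n_def)
    show False
    proof (rule ultrametric_agreement_no_induced_C5)
      show "ultrametric_on {..4} t" "ultrametric_on {..4} s"
        using \<open>n = 5\<close> by (auto intro!: ultrametric)
      show "t i j = s i j \<longleftrightarrow> j = Suc i \<or> (i = 0 \<and> j = 4)" if "i < j" "j \<le> 4" for i j
        using adj[of i j] that \<open>n = 5\<close> by (auto simp: mod_Suc)
    qed
  qed
  show "\<not> 7 \<le> length vs"
  proof
    assume "7 \<le> length vs"
    then have "7 \<le> n" by (simp add: n_def)
    show False
    proof (rule ultrametric_agreement_no_induced_P6)
      show "ultrametric_on {..5} t" "ultrametric_on {..5} s"
        using \<open>7 \<le> n\<close> by (auto intro!: ultrametric)
      show "t i j = s i j \<longleftrightarrow> j = Suc i" if "i < j" "j \<le> 5" for i j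
        using adj[of i j] that \<open>7 \<le> n\<close> by auto
    qed
  qed
qed

theorem proposition3:
  fixes VT :: "'a set" and ET :: "('a \<times> 'a) set" and zT :: 'a
    and VS :: "'b set" and ES :: "('b \<times> 'b) set" and zS :: 'b
    and \<sigma> :: "'a \<Rightarrow> 'b" and \<mu> :: "'a \<Rightarrow> 'b vert_or_edge"
    and \<tau>T :: "'a \<Rightarrow> real" and \<tau>S :: "'b \<Rightarrow> real"
  assumes "relaxed_scenario VT ET zT VS ES zS \<sigma> \<mu> \<tau>T \<tau>S"
  shows "(\<forall>vs. induced_cycle (edt_edge VT ET zT VS ES \<sigma> \<tau>T \<tau>S) (leaves VT ET zT) vs
              \<longrightarrow> length vs \<noteq> 5 \<and> \<not> length vs \<ge> 7)
       \<and> (\<forall>vs. induced_cycle (edt_edge VT ET zT VS ES \<sigma> \<tau>T \<tau>S) (leaves VT ET zT) vs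
              \<longrightarrow> \<not> (odd (length vs) \<and> length vs > 3))"
proof -
  let ?L = "leaves VT ET zT"
  have "planted_phylo_tree VT ET zT" "planted_phylo_tree VS ES zS"
    and "time_map VT ET \<tau>T" "time_map VS ES \<tau>S"
    and "\<sigma> ` ?L \<subseteq> VS"
    using assms unfolding relaxed_scenario_def leaves_def by auto
  then have "ultrametric_on ?L (\<lambda>x y. \<tau>T (lca VT ET x y))"
    and "ultrametric_on ?L (\<lambda>x y. \<tau>S (lca VS ES (\<sigma> x) (\<sigma> y)))"
    using ultrametric_on_compose[OF lca_time_ultrametric, of VT ET zT \<tau>T "\<lambda>x. x" ?L]
      ultrametric_on_compose[OF lca_time_ultrametric, of VS ES zS \<tau>S \<sigma> ?L]
    by (auto simp: leaves_def)
  moreover have "induced_cycle (edt_edge VT ET zT VS ES \<sigma> \<tau>T \<tau>S) ?L vs \<longleftrightarrow>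
      induced_cycle (\<lambda>x y. \<tau>T (lca VT ET x y) = \<tau>S (lca VS ES (\<sigma> x) (\<sigma> y))) ?L vs" for vs
    by (rule induced_cycle_cong) (simp add: edt_edge_def)
  ultimately have "length vs \<noteq> 5 \<and> \<not> 7 \<le> length vs"
    if "induced_cycle (edt_edge VT ET zT VS ES \<sigma> \<tau>T \<tau>S) ?L vs" for vs
    using ultrametric_agreement_induced_cycle_length that by blast
  moreover have "n = 5 \<or> 7 \<le> n" if "odd n" "3 < n" for n :: nat
    using that by presburger
  ultimately show ?thesis by blast
qed

end
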